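(* Let $\mu$ be a nonatomic positive Radon measure on $\mathbb{R}$ and $g\in\Lambda_\mu$. Then there is a constant $C$ such that for every triple $a<x<b$, \[|g(x)-g(a)|+|g(x)-g(b)|\le|g(a)-g(b)|+C\mu([a,b]),\] and for every bounded interval $[a,b]$ there is $C'$ such that $\sum_{j=1}^N|g(x_j)-g(x_{j-1})|\le C'\log(N+1)$ for every partition $a=x_0<\dots<x_N=b$.
   Context: For a nonatomic positive Radon measure $\mu$ on $\mathbb{R}$, $\Lambda_\mu$ is the class of continuous $g\colon\mathbb{R}\to\mathbb{R}$ for which there is $M>0$ with $|g(x+h)-2g(x)+g(x-h)|\le M\mu([x-h,x+h])$ for all $x\in\mathbb{R}$, $h\ge0$. *)

theory Defs
  imports "HOL-Analysis.Analysis"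
begin

text \<open>A positive Radon measure on the real line: a Borel measure that is finite on
  compact sets (on \<real> every locally finite Borel measure is regular).  Nonatomic:
  every singleton has measure zero.\<close>
definition nonatomic_radon_real :: "real measure \<Rightarrow> bool" where
  "nonatomic_radon_real \<mu> \<longleftrightarrow>
     sets \<mu> = sets borel \<and>
     (\<forall>K. compact K \<longrightarrow> emeasure \<mu> K < \<infinity>) \<and>
     (\<forall>x. emeasure \<mu> {x} = 0)"

definition Lambda_class :: "real measure \<Rightarrow> (real \<Rightarrow> real) set" where
  "Lambda_class \<mu> = {g. continuous_on UNIV g \<and>
     (\<exists>M>0. \<forall>x h. h \<ge> 0 \<longrightarrow>
        \<bar>g (x + h) - 2 * g x + g (x - h)\<bar> \<le> M * measure \<mu> {x - h..x + h})}"

end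

theory Submission
  imports Defs
begin

(* Write nu(a,b) = M * mu([a,b]) for the constant M of the Lambda_mu condition.
   Because mu is nonatomic, nu is a nonnegative superadditive interval function, and
   everything below is proved for an arbitrary such nu.

   Three-point inequality: a maximiser m of g on [a,b] and the largest interval centred
   at m inside [a,b] give g m <= max (g a) (g b) + nu(a,b); applied to g and -g this
   yields |g x - g a| + |g x - g b| <= |g a - g b| + 2 nu(a,b) for a <= x <= b.

   Logarithmic variation bound (for any superadditive nu, applied to 2 nu): for a
   nondecreasing sequence in [a,b], the three-point inequality merges consecutive pairs
   of steps, so the variation over 2m steps exceeds that of the even-indexed subsequence
   by at most nu(a,b).  Iterating n times, the
   variation over 2^n steps is at most osc + n nu(a,b), where osc bounds the oscillation of
   g on [a,b].  A partition with N steps is padded to 2^(n+1) steps where 2^n <= N, which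
   gives the bound C' log(N+1). *)

section \<open>Superadditive interval functions\<close>

text \<open>An interval function that is nonnegative and superadditive under splitting an
  interval at an interior point.  This is all the proof needs from the measure.\<close>
definition superadditive_interval_fun :: "(real \<Rightarrow> real \<Rightarrow> real) \<Rightarrow> bool" where
  "superadditive_interval_fun \<nu> \<longleftrightarrow>
     (\<forall>a b. a \<le> b \<longrightarrow> 0 \<le> \<nu> a b) \<and>
     (\<forall>a c b. a \<le> c \<longrightarrow> c \<le> b \<longrightarrow> \<nu> a c + \<nu> c b \<le> \<nu> a b)"

lemma superadditive_nonneg:
  assumes "superadditive_interval_fun \<nu>" "a \<le> b"
  shows "0 \<le> \<nu> a b"
  using assms unfolding superadditive_interval_fun_def by blast

lemma superadditive_split:
  assumes "superadditive_interval_fun \<nu>" "a \<le> c" "c \<le> b"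
  shows "\<nu> a c + \<nu> c b \<le> \<nu> a b"
  using assms unfolding superadditive_interval_fun_def by blast

lemma superadditive_mono:
  assumes nu: "superadditive_interval_fun \<nu>" and "a \<le> c" "c \<le> d" "d \<le> b"
  shows "\<nu> c d \<le> \<nu> a b"
proof -
  have "\<nu> a c + \<nu> c d \<le> \<nu> a d" "\<nu> a d + \<nu> d b \<le> \<nu> a b"
    using superadditive_split[OF nu] assms by auto
  moreover have "0 \<le> \<nu> a c" "0 \<le> \<nu> d b"
    using superadditive_nonneg[OF nu] assms by auto
  ultimately show ?thesis by linarith
qed

text \<open>A nonatomic Radon measure, scaled by a nonnegative constant, is superadditive on
  intervals: the two halves of a split overlap only in a null point.\<close>
lemma nonatomic_radon_superadditive:
  assumes mu: "nonatomic_radon_real \<mu>" and M: "0 \<le> M"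
  shows "superadditive_interval_fun (\<lambda>a b. M * measure \<mu> {a..b})"
proof -
  have fin: "{a..b} \<in> fmeasurable \<mu>" for a b
    using mu unfolding nonatomic_radon_real_def fmeasurable_def by auto
  have "measure \<mu> {a..c} + measure \<mu> {c..b} \<le> measure \<mu> {a..b}"
    if "a \<le> c" "c \<le> b" for a b c
  proof -
    have "{a..b} = {a..c} \<union> {c..b}" "{a..c} \<inter> {c..b} = {c}" using that by auto
    moreover have "measure \<mu> {c} = 0"
      using mu unfolding nonatomic_radon_real_def measure_def by simp
    ultimately show ?thesis using measure_Un3[OF fin fin, of a c c b] by simp
  qed
  then show ?thesis
    unfolding superadditive_interval_fun_def using M
    by (auto simp: distrib_left[symmetric] intro: mult_left_mono)
qed

section \<open>The three-point inequality\<close>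

text \<open>The key point is the behaviour of g at a maximiser.\<close>
lemma above_endpoints_bound:
  fixes g :: "real \<Rightarrow> real"
  assumes nu: "superadditive_interval_fun \<nu>" and cont: "continuous_on UNIV g"
    and second_diff: "\<And>x h. 0 \<le> h \<Longrightarrow> \<bar>g (x + h) - 2 * g x + g (x - h)\<bar> \<le> \<nu> (x - h) (x + h)"
    and x: "a \<le> x" "x \<le> b"
  shows "g x \<le> max (g a) (g b) + \<nu> a b"
proof -
  have "{a..b} \<noteq> {}" using x by auto
  then obtain m where m: "m \<in> {a..b}" and m_max: "\<And>y. y \<in> {a..b} \<Longrightarrow> g y \<le> g m"
    using continuous_attains_sup[OF compact_Icc _ continuous_on_subset[OF cont]] by blast
  define h where "h = min (m - a) (b - m)"
  have h: "0 \<le> h" "a \<le> m - h" "m - h \<le> m + h" "m + h \<le> b" using m by (auto simp: h_def)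
  have "g (m + h) \<le> g m" "g (m - h) \<le> g m" using m_max h by auto
  moreover have "\<bar>g (m + h) - 2 * g m + g (m - h)\<bar> \<le> \<nu> a b"
    using second_diff[OF h(1), of m] superadditive_mono[OF nu h(2-4)] by linarith
  moreover have "m - h = a \<or> m + h = b" by (auto simp: h_def)
  ultimately have "g m \<le> max (g a) (g b) + \<nu> a b" by auto
  moreover have "g x \<le> g m" using m_max x by simp
  ultimately show ?thesis by linarith
qed

text \<open>The three-point inequality, by applying the previous lemma to g and to -g
  (the hypothesis on second differences is symmetric under negation).\<close>
lemma three_point_inequality:
  fixes g :: "real \<Rightarrow> real"
  assumes nu: "superadditive_interval_fun \<nu>" and cont: "continuous_on UNIV g"
    and second_diff: "\<And>x h. 0 \<le> h \<Longrightarrow> \<bar>g (x + h) - 2 * g x + g (x - h)\<bar> \<le> \<nu> (x - h) (x + h)"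
    and x: "a \<le> x" "x \<le> b"
  shows "\<bar>g x - g a\<bar> + \<bar>g x - g b\<bar> \<le> \<bar>g a - g b\<bar> + 2 * \<nu> a b"
proof -
  have upper: "g x \<le> max (g a) (g b) + \<nu> a b"
    by (rule above_endpoints_bound[OF nu cont second_diff x])
  have "- g x \<le> max (- g a) (- g b) + \<nu> a b"
  proof (rule above_endpoints_bound[OF nu _ _ x])
    show "continuous_on UNIV (\<lambda>t. - g t)" using cont by (intro continuous_intros)
    show "\<bar>- g (y + h) - 2 * - g y + - g (y - h)\<bar> \<le> \<nu> (y - h) (y + h)" if "0 \<le> h" for y h
      using second_diff[OF that, of y] by linarith
  qed
  then have lower: "min (g a) (g b) - \<nu> a b \<le> g x" by linarith
  have "0 \<le> \<nu> a b" using superadditive_nonneg[OF nu] x by simp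
  then show ?thesis using upper lower by (simp add: max_def min_def split: if_splits)
qed

section \<open>Variation along monotone sequences\<close>

definition variation_sum :: "(real \<Rightarrow> real) \<Rightarrow> (nat \<Rightarrow> real) \<Rightarrow> nat \<Rightarrow> real" where
  "variation_sum g xs N = (\<Sum>j<N. \<bar>g (xs (Suc j)) - g (xs j)\<bar>)"

lemma variation_sum_0 [simp]: "variation_sum g xs 0 = 0"
  by (simp add: variation_sum_def)

lemma variation_sum_Suc:
  "variation_sum g xs (Suc n) = variation_sum g xs n + \<bar>g (xs (Suc n)) - g (xs n)\<bar>"
  by (simp add: variation_sum_def)

lemma variation_sum_shifted:
  "(\<Sum>j=1..N. \<bar>g (xs j) - g (xs (j - 1))\<bar>) = variation_sum g xs N"
  unfolding variation_sum_def by (subst sum_bounds_lt_plus1[symmetric]) simp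

lemma variation_sum_halving:
  fixes g :: "real \<Rightarrow> real"
  assumes nu: "superadditive_interval_fun \<nu>"
    and three_point: "\<And>a x b. a \<le> x \<Longrightarrow> x \<le> b \<Longrightarrow>
       \<bar>g x - g a\<bar> + \<bar>g x - g b\<bar> \<le> \<bar>g a - g b\<bar> + \<nu> a b"
    and xs: "mono xs"
  shows "variation_sum g xs (2 * m)
           \<le> variation_sum g (\<lambda>i. xs (2 * i)) m + \<nu> (xs 0) (xs (2 * m))"
proof (induction m)
  case 0
  show ?case using superadditive_nonneg[OF nu order_refl] by simp
next
  case (Suc m)
  let ?a = "xs (2 * m)" and ?x = "xs (Suc (2 * m))" and ?b = "xs (2 * Suc m)"
  have ord: "xs 0 \<le> ?a" "?a \<le> ?x" "?x \<le> ?b" using xs by (auto intro: monoD)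
  have "variation_sum g xs (2 * Suc m) = variation_sum g xs (2 * m) + \<bar>g ?x - g ?a\<bar> + \<bar>g ?b - g ?x\<bar>"
    by (simp add: variation_sum_Suc)
  also have "\<dots> \<le> variation_sum g (\<lambda>i. xs (2 * i)) m + \<nu> (xs 0) ?a + \<bar>g ?b - g ?a\<bar> + \<nu> ?a ?b"
    using Suc.IH three_point[OF ord(2,3)] by linarith
  also have "\<dots> \<le> variation_sum g (\<lambda>i. xs (2 * i)) (Suc m) + \<nu> (xs 0) ?b"
    using superadditive_split[OF nu ord(1)] ord by (simp add: variation_sum_Suc)
  finally show ?case .
qed

lemma variation_sum_dyadic:
  fixes g :: "real \<Rightarrow> real"
  assumes nu: "superadditive_interval_fun \<nu>"
    and three_point: "\<And>a x b. a \<le> x \<Longrightarrow> x \<le> b \<Longrightarrow>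
       \<bar>g x - g a\<bar> + \<bar>g x - g b\<bar> \<le> \<bar>g a - g b\<bar> + \<nu> a b"
    and osc: "\<And>u v. u \<in> {a..b} \<Longrightarrow> v \<in> {a..b} \<Longrightarrow> \<bar>g u - g v\<bar> \<le> D"
    and xs: "mono xs" "range xs \<subseteq> {a..b}"
  shows "variation_sum g xs (2 ^ n) \<le> D + real n * \<nu> a b"
  using xs
proof (induction n arbitrary: xs)
  case 0
  then have "xs 0 \<in> {a..b}" "xs 1 \<in> {a..b}" by (auto simp: image_subset_iff)
  then show ?case using osc[of "xs 1" "xs 0"] by (simp add: variation_sum_def)
next
  case (Suc n)
  let ?ys = "\<lambda>i. xs (2 * i)"
  have "mono ?ys" "range ?ys \<subseteq> {a..b}"
    using Suc.prems by (auto simp: mono_def)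
  then have "variation_sum g ?ys (2 ^ n) \<le> D + real n * \<nu> a b" by (rule Suc.IH)
  moreover have "\<nu> (xs 0) (xs (2 * 2 ^ n)) \<le> \<nu> a b"
  proof (rule superadditive_mono[OF nu])
    show "a \<le> xs 0" "xs (2 * 2 ^ n) \<le> b" using Suc.prems(2) by (auto simp: image_subset_iff)
    show "xs 0 \<le> xs (2 * 2 ^ n)" using Suc.prems(1) by (simp add: monoD)
  qed
  ultimately show ?case
    using variation_sum_halving[OF nu three_point Suc.prems(1), of "2 ^ n"]
    by (simp add: algebra_simps)
qed

lemma variation_sum_pad:
  assumes "N \<le> K"
  shows "variation_sum g (\<lambda>j. xs (min j N)) K = variation_sum g xs N"
  using assms
proof (induction K rule: dec_induct)
  case base
  then show ?case by (simp add: variation_sum_def)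
next
  case (step k)
  then show ?case by (simp add: variation_sum_Suc)
qed

text \<open>The logarithmic variation bound for a nondecreasing partition of [a,b], with an
  explicit constant.  The partition is padded to 2^(n+1) points where 2^n <= N.\<close>
lemma variation_sum_log_bound:
  fixes g :: "real \<Rightarrow> real"
  assumes nu: "superadditive_interval_fun \<nu>"
    and three_point: "\<And>a x b. a \<le> x \<Longrightarrow> x \<le> b \<Longrightarrow>
       \<bar>g x - g a\<bar> + \<bar>g x - g b\<bar> \<le> \<bar>g a - g b\<bar> + \<nu> a b"
    and osc: "\<And>u v. u \<in> {a..b} \<Longrightarrow> v \<in> {a..b} \<Longrightarrow> \<bar>g u - g v\<bar> \<le> D"
    and ends: "xs 0 = a" "xs N = b" and steps: "\<And>j. j < N \<Longrightarrow> xs j \<le> xs (Suc j)"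
  shows "variation_sum g xs N \<le> (D + 2 * \<nu> a b) / ln 2 * ln (real N + 1)"
proof (cases "N = 0")
  case True
  then show ?thesis by simp
next
  case False
  define ys where "ys j = xs (min j N)" for j
  have "ys j \<le> ys (Suc j)" for j
    using steps[of j] by (cases "j < N") (auto simp: ys_def)
  then have "mono ys" by (simp add: mono_iff_le_Suc)
  have ys_in: "a \<le> ys j \<and> ys j \<le> b" for j
  proof -
    have "ys 0 \<le> ys j" "ys j \<le> ys (max j N)" using \<open>mono ys\<close> by (auto intro: monoD)
    moreover have "ys 0 = a" "ys (max j N) = b" using ends by (auto simp: ys_def)
    ultimately show ?thesis by simp
  qed
  then have ys_range: "range ys \<subseteq> {a..b}" by auto
  have "a \<le> b" using ys_in[of 0] by linarith
  then have "0 \<le> D" "0 \<le> \<nu> a b" using osc[of a a] superadditive_nonneg[OF nu] by auto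
  obtain n where n: "2 ^ n \<le> N" "N < 2 ^ (n + 1)"
    using ex_power_ivl1[of 2 N] False by auto
  define L where "L = log 2 (real N + 1)"
  have "real n = log 2 (2 ^ n)" by simp
  also have "\<dots> \<le> L"
  proof -
    have "real (2 ^ n) \<le> real N" using n(1) by (simp only: of_nat_le_iff)
    moreover have "real (2 ^ n) = (2::real) ^ n" by simp
    ultimately have "(2::real) ^ n \<le> real N + 1" by linarith
    then show ?thesis unfolding L_def by (subst log_le_cancel_iff) auto
  qed
  finally have "real n \<le> L" .
  moreover have "1 \<le> L" unfolding L_def using False by simp
  ultimately have "real (n + 1) * \<nu> a b \<le> (2 * L) * \<nu> a b"
    using \<open>0 \<le> \<nu> a b\<close> by (intro mult_right_mono) auto
  moreover have "D * 1 \<le> D * L" using mult_left_mono[OF \<open>1 \<le> L\<close> \<open>0 \<le> D\<close>] .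
  moreover have "variation_sum g xs N \<le> D + real (n + 1) * \<nu> a b"
    using variation_sum_dyadic[OF nu three_point osc \<open>mono ys\<close> ys_range, of "n + 1"]
      variation_sum_pad[of N "2 ^ (n + 1)" g xs] n(2) by (simp add: ys_def[abs_def])
  ultimately have "variation_sum g xs N \<le> (D + 2 * \<nu> a b) * L"
    by (simp add: algebra_simps)
  then show ?thesis by (simp add: L_def log_def)
qed

lemma bounded_oscillation_Icc:
  fixes g :: "real \<Rightarrow> real"
  assumes "continuous_on UNIV g"
  obtains D where "\<And>u v. u \<in> {a..b} \<Longrightarrow> v \<in> {a..b} \<Longrightarrow> \<bar>g u - g v\<bar> \<le> D"
proof -
  have "bounded (g ` {a..b})"
    using compact_continuous_image[OF continuous_on_subset[OF assms] compact_Icc]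
    by (simp add: compact_imp_bounded)
  then obtain B where B: "\<forall>u\<in>{a..b}. \<bar>g u\<bar> \<le> B" by (auto simp: bounded_iff)
  have "\<bar>g u - g v\<bar> \<le> 2 * B" if "u \<in> {a..b}" "v \<in> {a..b}" for u v
    using B that by (smt (verit))
  then show ?thesis by (rule that)
qed

theorem mainTheorem11:
  fixes \<mu> :: "real measure" and g :: "real \<Rightarrow> real"
  assumes "nonatomic_radon_real \<mu>"
    and "g \<in> Lambda_class \<mu>"
  shows "(\<exists>C. \<forall>a x b. a < x \<and> x < b \<longrightarrow>
            \<bar>g x - g a\<bar> + \<bar>g x - g b\<bar> \<le> \<bar>g a - g b\<bar> + C * measure \<mu> {a..b})
       \<and> (\<forall>a b. \<exists>C'. \<forall>(N::nat) (xs::nat \<Rightarrow> real).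
            xs 0 = a \<and> xs N = b \<and> (\<forall>j<N. xs j < xs (Suc j)) \<longrightarrow>
            (\<Sum>j=1..N. \<bar>g (xs j) - g (xs (j - 1))\<bar>) \<le> C' * ln (real N + 1))"
proof -
  obtain M where "M > 0" and cont: "continuous_on UNIV g"
    and second_diff: "\<And>x h. 0 \<le> h \<Longrightarrow> \<bar>g (x + h) - 2 * g x + g (x - h)\<bar> \<le> M * measure \<mu> {x - h..x + h}"
    using assms(2) unfolding Lambda_class_def by auto
  define \<nu> where "\<nu> a b = 2 * M * measure \<mu> {a..b}" for a b
  have nu: "superadditive_interval_fun \<nu>"
    unfolding \<nu>_def using nonatomic_radon_superadditive[OF assms(1)] \<open>M > 0\<close> by simp
  have three_point: "\<bar>g x - g a\<bar> + \<bar>g x - g b\<bar> \<le> \<bar>g a - g b\<bar> + \<nu> a b"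
    if "a \<le> x" "x \<le> b" for a x b
    using three_point_inequality[OF nonatomic_radon_superadditive[OF assms(1)] cont second_diff that]
      \<open>M > 0\<close> by (simp add: \<nu>_def)
  have variation: "\<exists>C'. \<forall>N xs. xs 0 = a \<and> xs N = b \<and> (\<forall>j<N. xs j < xs (Suc j)) \<longrightarrow>
      (\<Sum>j=1..N. \<bar>g (xs j) - g (xs (j - 1))\<bar>) \<le> C' * ln (real N + 1)" for a b
  proof -
    obtain D where osc: "\<And>u v. u \<in> {a..b} \<Longrightarrow> v \<in> {a..b} \<Longrightarrow> \<bar>g u - g v\<bar> \<le> D"
      using bounded_oscillation_Icc[OF cont] by blast
    show ?thesis
    proof (intro exI allI impI)
      fix N xs assume "xs 0 = a \<and> xs N = b \<and> (\<forall>j<N. xs j < xs (Suc j))"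
      then have "variation_sum g xs N \<le> (D + 2 * \<nu> a b) / ln 2 * ln (real N + 1)"
        using variation_sum_log_bound[OF nu three_point osc, where xs=xs and N=N] by (simp add: less_imp_le)
      then show "(\<Sum>j=1..N. \<bar>g (xs j) - g (xs (j - 1))\<bar>) \<le> (D + 2 * \<nu> a b) / ln 2 * ln (real N + 1)"
        by (simp only: variation_sum_shifted)
    qed
  qed
  show ?thesis
    using three_point variation by (auto simp: \<nu>_def intro!: exI[of _ "2 * M"])
qed

end
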